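(* Let $X_0^*$ be a $\{1,2,\dots\}$-valued random variable with $\mathbf P(X_0^*=k)\sim c_0m^{-k}k^{-\alpha}$ as $k\to\infty$, for some $0<c_0<\infty$ and $2\le\alpha\le4$. For integers $M$, let $X_0^{(M)}:=X_0^*\mathbf 1_{\{X_0^*\le M\}}$ and $p_M:=\big(1+\mathbf E\{[(m-1)X_0^{(M)}-1]m^{X_0^{(M)}}\}\big)^{-1}$. Then, as $M\to\infty$, $$p_M-p_c(X_0^* )\sim\begin{cases}\frac{(m-1)c_0\,p_c(X_0^* )^2}{\alpha-2}\,\frac{1}{M^{\alpha-2}},&2<\alpha\le4,\\[2pt] \frac{1}{(m-1)c_0}\,\frac{1}{\log M},&\alpha=2.\end{cases}$$
   Context: Fix an integer $m\ge2$. $p_c(X_0^* ):=\frac{1}{1+\mathbf E\{[(m-1)X_0^*-1]m^{X_0^*}\}}$, interpreted as $0$ when the expectation is infinite (so $p_c(X_0^* )=0$ when $\alpha=2$, and $p_c(X_0^* )>0$ when $\alpha>2$); it is the critical parameter of the recursive system $X_{n+1}\overset d=(X_{n,1}+\cdots+X_{n,m}-1)^+$ started from the law $(1-p)\delta_0+pP_{X_0^*}$. $a_M\sim b_M$ means $a_M/b_M\to1$. *)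

theory Defs
  imports "HOL-Probability.Probability" "HOL-Library.Landau_Symbols"
begin

definition wfun :: "nat \<Rightarrow> nat \<Rightarrow> real" where
  "wfun m k = ((real m - 1) * real k - 1) * real m ^ k"

text \<open>p_c(X_0^*) for X_0^* with law P: 1/(1 + E[wfun X]), read as 0 when the
  expectation is infinite (i.e. wfun X is not integrable; wfun is nonnegative on {1,2,...}).\<close>
definition pc :: "nat \<Rightarrow> nat pmf \<Rightarrow> real" where
  "pc m P = (if integrable (measure_pmf P) (wfun m)
             then 1 / (1 + measure_pmf.expectation P (wfun m)) else 0)"

definition trunc :: "nat \<Rightarrow> nat \<Rightarrow> nat" where
  "trunc M k = (if k \<le> M then k else 0)"

definition pM :: "nat \<Rightarrow> nat pmf \<Rightarrow> nat \<Rightarrow> real" where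
  "pM m P M = 1 / (1 + measure_pmf.expectation P (\<lambda>k. wfun m (trunc M k)))"

end

theory Submission
  imports Defs "HOL-Real_Asymp.Real_Asymp"
begin

(*
  Put h_k = P(X = k) (w(k) + 1) with w(k) = ((m - 1) k - 1) m^k. Since the point masses sum
  to 1, 1/p_M is the partial sum h_0 + ... + h_M, and 1/p_c is the whole series when it
  converges (otherwise p_c = 0). The tail hypothesis gives h_k ~ (m - 1) c0 k^(1 - alpha).
  For alpha > 2 the series converges to some S, and p_M - p_c = T_M / (S_M S) ~ p_c^2 T_M, where
  the tail T_M ~ (m - 1) c0 M^(2 - alpha) / (alpha - 2) is found by comparison with a
  telescoping series. For alpha = 2 the partial sums grow like (m - 1) c0 ln M, by comparison
  with the harmonic numbers.
*)

lemma asymp_equiv_eventually_abs_diff_le: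
  fixes f g :: "nat \<Rightarrow> real"
  assumes "f \<sim>[at_top] g" and "\<And>k. 0 \<le> g k" and "c > 0"
  obtains N where "\<And>k. k \<ge> N \<Longrightarrow> \<bar>f k - g k\<bar> \<le> c * g k"
proof -
  from landau_o.smallD[OF asymp_equiv_imp_diff_smallo[OF assms(1)] assms(3)]
  obtain N where "\<And>k. k \<ge> N \<Longrightarrow> norm (f k - g k) \<le> c * norm (g k)"
    by (auto simp: eventually_at_top_linorder)
  with assms(2) show ?thesis by (intro that[of N]) simp
qed

lemma summable_asymp_equiv:
  fixes f g :: "nat \<Rightarrow> real"
  assumes "f \<sim>[at_top] g" and "summable g" and "\<And>k. 0 \<le> g k"
  shows "summable f"
  using assms(2,3) by (intro summable_comparison_test_bigo[OF _ asymp_equiv_imp_bigo[OF assms(1)]]) simp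

lemma asymp_equiv_suminf_tails:
  fixes f g :: "nat \<Rightarrow> real"
  assumes equiv: "f \<sim>[at_top] g" and g_summable: "summable g" and g_nonneg: "\<And>k. 0 \<le> g k"
  shows "(\<lambda>M. \<Sum>k. f (k + M)) \<sim>[at_top] (\<lambda>M. \<Sum>k. g (k + M))"
  unfolding asymp_equiv_altdef
proof (rule landau_o.smallI)
  fix c :: real assume "c > 0"
  then obtain N where N: "\<And>k. k \<ge> N \<Longrightarrow> \<bar>f k - g k\<bar> \<le> c * g k"
    using asymp_equiv_eventually_abs_diff_le[OF equiv g_nonneg] by blast
  have f_summable: "summable f"
    by (rule summable_asymp_equiv[OF equiv g_summable g_nonneg])
  show "eventually (\<lambda>M. norm ((\<Sum>k. f (k + M)) - (\<Sum>k. g (k + M))) \<le> c * norm (\<Sum>k. g (k + M))) at_top"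
    using eventually_ge_at_top[of N]
  proof eventually_elim
    case (elim M)
    have gM: "summable (\<lambda>k. g (k + M))" and fM: "summable (\<lambda>k. f (k + M))"
      using g_summable f_summable by (simp_all add: summable_iff_shift)
    have bound: "\<bar>f (k + M) - g (k + M)\<bar> \<le> c * g (k + M)" for k
      using N elim by simp
    have diff_summable: "summable (\<lambda>k. \<bar>f (k + M) - g (k + M)\<bar>)"
      by (rule summable_comparison_test'[OF summable_mult[OF gM, of c], where N = 0]) (use bound in simp)
    have "\<bar>(\<Sum>k. f (k + M)) - (\<Sum>k. g (k + M))\<bar> = \<bar>\<Sum>k. f (k + M) - g (k + M)\<bar>"
      using suminf_diff[OF fM gM] by simp
    also have "\<dots> \<le> (\<Sum>k. \<bar>f (k + M) - g (k + M)\<bar>)"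
      by (rule summable_rabs[OF diff_summable])
    also have "\<dots> \<le> (\<Sum>k. c * g (k + M))"
      by (rule suminf_le[OF bound diff_summable summable_mult[OF gM]])
    also have "\<dots> = c * \<bar>\<Sum>k. g (k + M)\<bar>"
      using suminf_nonneg[OF gM] g_nonneg by (simp add: suminf_mult[OF gM])
    finally show ?case by simp
  qed
qed

lemma asymp_equiv_partial_sums:
  fixes f g :: "nat \<Rightarrow> real"
  assumes equiv: "f \<sim>[at_top] g" and g_nonneg: "\<And>k. 0 \<le> g k"
    and g_diverges: "filterlim (\<lambda>n. \<Sum>k\<le>n. g k) at_top at_top"
  shows "(\<lambda>n. \<Sum>k\<le>n. f k) \<sim>[at_top] (\<lambda>n. \<Sum>k\<le>n. g k)"
  unfolding asymp_equiv_altdef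
proof (rule landau_o.smallI)
  fix c :: real assume c: "c > 0"
  then obtain N where N: "\<And>k. k \<ge> N \<Longrightarrow> \<bar>f k - g k\<bar> \<le> c / 2 * g k"
    using asymp_equiv_eventually_abs_diff_le[OF equiv g_nonneg, of "c / 2"] by auto
  define K where "K = (\<Sum>k<N. \<bar>f k - g k\<bar>)"
  have bound: "\<bar>(\<Sum>k\<le>n. f k) - (\<Sum>k\<le>n. g k)\<bar> \<le> K + c / 2 * (\<Sum>k\<le>n. g k)" for n
  proof -
    have pointwise: "\<bar>f k - g k\<bar> \<le> c / 2 * g k + (if k < N then \<bar>f k - g k\<bar> else 0)" for k
      using N[of k] c g_nonneg[of k] by auto
    have "\<bar>(\<Sum>k\<le>n. f k) - (\<Sum>k\<le>n. g k)\<bar> \<le> (\<Sum>k\<le>n. \<bar>f k - g k\<bar>)"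
      by (metis sum_abs sum_subtractf)
    also have "\<dots> \<le> (\<Sum>k\<le>n. c / 2 * g k + (if k < N then \<bar>f k - g k\<bar> else 0))"
      by (intro sum_mono pointwise)
    also have "\<dots> = c / 2 * (\<Sum>k\<le>n. g k) + (\<Sum>k\<in>{..n} \<inter> {..<N}. \<bar>f k - g k\<bar>)"
      by (simp add: sum.distrib sum_distrib_left sum.inter_restrict lessThan_def)
    also have "(\<Sum>k\<in>{..n} \<inter> {..<N}. \<bar>f k - g k\<bar>) \<le> K"
      unfolding K_def by (rule sum_mono2) auto
    finally show ?thesis by simp
  qed
  have "eventually (\<lambda>n. 2 * K / c \<le> (\<Sum>k\<le>n. g k)) at_top"
    using g_diverges by (simp add: filterlim_at_top)
  then show "eventually (\<lambda>n. norm ((\<Sum>k\<le>n. f k) - (\<Sum>k\<le>n. g k)) \<le> c * norm (\<Sum>k\<le>n. g k)) at_top"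
  proof eventually_elim
    case (elim n)
    then have "K \<le> c / 2 * (\<Sum>k\<le>n. g k)"
      using c by (simp add: field_simps)
    then show ?case
      using bound[of n] sum_nonneg[of "{..n}" g] g_nonneg by simp
  qed
qed

lemma power_differences_tail_sums:
  fixes s :: real
  assumes "s > 1"
  shows "(\<lambda>k. (real (k + M) + 1) powr (1 - s) - (real (k + M) + 2) powr (1 - s))
           sums (real M + 1) powr (1 - s)"
proof -
  have "(\<lambda>k. (real (k + M) + 1) powr (1 - s)) \<longlonglongrightarrow> 0"
    using assms by real_asymp
  from telescope_sums'[OF this] show ?thesis
    by (simp add: add_ac)
qed

lemma power_law_tail_asymp_equiv:
  fixes f :: "nat \<Rightarrow> real"
  assumes equiv: "f \<sim>[at_top] (\<lambda>k. c * real k powr - s)" and "s > 1" and "c \<ge> 0"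
  shows "summable f"
    and "(\<lambda>M. \<Sum>k. f (k + Suc M)) \<sim>[at_top] (\<lambda>M. c / (s - 1) * real M powr (1 - s))"
proof -
  define g where "g k = c / (s - 1) * ((real k + 1) powr (1 - s) - (real k + 2) powr (1 - s))" for k
  have g_nonneg: "0 \<le> g k" for k
    unfolding g_def using \<open>s > 1\<close> \<open>c \<ge> 0\<close> by (intro mult_nonneg_nonneg) (auto intro: powr_mono2')
  have g_tail_sums: "(\<lambda>k. g (k + M)) sums (c / (s - 1) * (real M + 1) powr (1 - s))" for M
    unfolding g_def by (rule sums_mult[OF power_differences_tail_sums[OF \<open>s > 1\<close>]])
  have "g \<sim>[at_top] (\<lambda>k. c / (s - 1) * ((s - 1) * real k powr - s))"
    unfolding g_def by (rule asymp_equiv_mult[OF asymp_equiv_refl]) (use \<open>s > 1\<close> in real_asymp)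
  also have "\<dots> = (\<lambda>k. c * real k powr - s)"
    using \<open>s > 1\<close> by (simp add: fun_eq_iff)
  finally have "f \<sim>[at_top] g"
    using equiv by (metis asymp_equiv_symI asymp_equiv_trans)
  moreover have g_summable: "summable g"
    using g_tail_sums[of 0] by (simp add: sums_summable)
  ultimately show "summable f"
    using g_nonneg by (rule summable_asymp_equiv)
  have "(\<lambda>M. \<Sum>k. f (k + Suc M)) \<sim>[at_top] (\<lambda>M. \<Sum>k. g (k + Suc M))"
    using asymp_equiv_compose'[OF asymp_equiv_suminf_tails[OF \<open>f \<sim>[at_top] g\<close> g_summable g_nonneg]
        filterlim_Suc] .
  also have "\<dots> = (\<lambda>M. c / (s - 1) * (real M + 2) powr (1 - s))"
  proof
    fix M
    show "(\<Sum>k. g (k + Suc M)) = c / (s - 1) * (real M + 2) powr (1 - s)"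
      using sums_unique[OF g_tail_sums[of "Suc M"]] by (simp add: add_ac)
  qed
  also have "\<dots> \<sim>[at_top] (\<lambda>M. c / (s - 1) * real M powr (1 - s))"
    by (rule asymp_equiv_mult[OF asymp_equiv_refl]) real_asymp
  finally show "(\<lambda>M. \<Sum>k. f (k + Suc M)) \<sim>[at_top] (\<lambda>M. c / (s - 1) * real M powr (1 - s))" .
qed

lemma harm_asymp_equiv_ln: "(harm :: nat \<Rightarrow> real) \<sim>[at_top] (\<lambda>n. ln (real n))"
proof (rule smallo_imp_asymp_equiv)
  have "(\<lambda>n. harm n - ln (real n)) \<in> O(\<lambda>_. 1)"
    by (rule bigoI_tendsto[where c = euler_mascheroni]) (use euler_mascheroni_LIMSEQ in simp_all)
  also have "(\<lambda>_. 1) \<in> o(\<lambda>n. ln (real n))"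
    by real_asymp
  finally show "(\<lambda>n. harm n - ln (real n)) \<in> o(\<lambda>n. ln (real n))" .
qed

lemma harmonic_law_partial_sums_asymp_equiv:
  fixes f :: "nat \<Rightarrow> real"
  assumes equiv: "f \<sim>[at_top] (\<lambda>k. c / real k)" and "c > 0"
  shows "(\<lambda>n. \<Sum>k\<le>n. f k) \<sim>[at_top] (\<lambda>n. c * ln (real n))"
proof -
  have partial_sums: "(\<Sum>k\<le>n. c / real k) = c * harm n" for n
    by (simp add: harm_def sum_distrib_left divide_inverse atMost_atLeast0 sum.atLeast_Suc_atMost)
  have "filterlim (\<lambda>n. c * harm n :: real) at_top at_top"
    using \<open>c > 0\<close> by (intro filterlim_tendsto_pos_mult_at_top[OF tendsto_const _ harm_at_top])
  then have "(\<lambda>n. \<Sum>k\<le>n. f k) \<sim>[at_top] (\<lambda>n. \<Sum>k\<le>n. c / real k)"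
    using \<open>c > 0\<close> by (intro asymp_equiv_partial_sums[OF equiv]) (simp_all add: partial_sums)
  also have "\<dots> = (\<lambda>n. c * harm n)"
    by (simp add: partial_sums)
  also have "\<dots> \<sim>[at_top] (\<lambda>n. c * ln (real n))"
    by (intro asymp_equiv_mult[OF asymp_equiv_refl harm_asymp_equiv_ln])
  finally show ?thesis .
qed

lemma inverse_partial_sums_asymp_equiv:
  fixes h :: "nat \<Rightarrow> real"
  assumes "summable h" and "suminf h \<noteq> 0"
  shows "(\<lambda>n. 1 / (\<Sum>k\<le>n. h k) - 1 / suminf h) \<sim>[at_top] (\<lambda>n. (\<Sum>k. h (k + Suc n)) / (suminf h)\<^sup>2)"
proof -
  have partial_sums: "(\<lambda>n. \<Sum>k\<le>n. h k) \<longlonglongrightarrow> suminf h"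
    by (rule summable_LIMSEQ'[OF assms(1)])
  have split: "suminf h = (\<Sum>k\<le>n. h k) + (\<Sum>k. h (k + Suc n))" for n
    using suminf_split_initial_segment[OF assms(1), of "Suc n"] by (simp add: lessThan_Suc_atMost)
  have "eventually (\<lambda>n. (\<Sum>k\<le>n. h k) \<noteq> 0) at_top"
    by (rule tendsto_imp_eventually_ne[OF partial_sums assms(2)])
  then have "eventually (\<lambda>n. (\<Sum>k. h (k + Suc n)) / ((\<Sum>k\<le>n. h k) * suminf h)
      = 1 / (\<Sum>k\<le>n. h k) - 1 / suminf h) at_top"
    by eventually_elim (use assms(2) split in \<open>simp add: field_simps\<close>)
  moreover have "(\<lambda>n. (\<Sum>k. h (k + Suc n)) / ((\<Sum>k\<le>n. h k) * suminf h))
      \<sim>[at_top] (\<lambda>n. (\<Sum>k. h (k + Suc n)) / (suminf h)\<^sup>2)"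
    unfolding power2_eq_square using assms(2)
    by (intro asymp_equiv_intros tendsto_imp_asymp_equiv_const partial_sums)
  ultimately show ?thesis
    by (elim asymp_equiv_transfer) auto
qed

lemma integrable_measure_pmf_nat_iff:
  fixes f :: "nat \<Rightarrow> real"
  shows "integrable (measure_pmf P) f \<longleftrightarrow> summable (\<lambda>k. \<bar>pmf P k * f k\<bar>)"
  unfolding measure_pmf_eq_density
  by (subst integrable_density) (auto simp: integrable_count_space_nat_iff)

lemma expectation_measure_pmf_nat:
  fixes f :: "nat \<Rightarrow> real"
  assumes "integrable (measure_pmf P) f"
  shows "measure_pmf.expectation P f = (\<Sum>k. pmf P k * f k)"
proof -
  have "integrable (count_space UNIV) (\<lambda>k. pmf P k * f k)"
    using assms unfolding measure_pmf_eq_density by (subst (asm) integrable_density) auto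
  then show ?thesis
    unfolding measure_pmf_eq_density by (subst integral_density) (auto simp: integral_count_space_nat)
qed

definition pc_weight :: "nat \<Rightarrow> nat pmf \<Rightarrow> nat \<Rightarrow> real" where
  "pc_weight m P k = pmf P k * (wfun m k + 1)"

lemma wfun_plus_one_nonneg: "0 \<le> wfun m k + 1"
proof (cases "m \<le> 1 \<or> k = 0")
  case True
  then show ?thesis
    by (auto simp: wfun_def le_Suc_eq power_0_left)
next
  case False
  then have "1 * 1 \<le> (real m - 1) * real k"
    by (intro mult_mono) auto
  then show ?thesis
    by (simp add: wfun_def)
qed

lemma pc_weight_nonneg: "0 \<le> pc_weight m P k"
  by (simp add: pc_weight_def wfun_plus_one_nonneg)

lemma integrable_wfun_iff: "integrable (measure_pmf P) (wfun m) \<longleftrightarrow> summable (pc_weight m P)"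
proof -
  have "integrable (measure_pmf P) (wfun m) \<longleftrightarrow> integrable (measure_pmf P) (\<lambda>k. wfun m k + 1)"
  proof
    assume "integrable (measure_pmf P) (wfun m)"
    then show "integrable (measure_pmf P) (\<lambda>k. wfun m k + 1)"
      by (intro Bochner_Integration.integrable_add measure_pmf.integrable_const)
  next
    assume "integrable (measure_pmf P) (\<lambda>k. wfun m k + 1)"
    from Bochner_Integration.integrable_diff[OF this measure_pmf.integrable_const[of P 1]]
    show "integrable (measure_pmf P) (wfun m)"
      by simp
  qed
  also have "\<dots> \<longleftrightarrow> summable (pc_weight m P)"
    using pc_weight_nonneg[of m P]
    by (simp add: integrable_measure_pmf_nat_iff pc_weight_def[abs_def])
  finally show ?thesis .
qed

lemma pc_eq_inverse_suminf:
  assumes "summable (pc_weight m P)"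
  shows "pc m P = 1 / suminf (pc_weight m P)"
proof -
  have integrable: "integrable (measure_pmf P) (\<lambda>k. wfun m k + 1)"
    using assms integrable_wfun_iff[of P m] by simp
  have "measure_pmf.expectation P (wfun m) = measure_pmf.expectation P (\<lambda>k. (wfun m k + 1) - 1)"
    by simp
  also have "\<dots> = measure_pmf.expectation P (\<lambda>k. wfun m k + 1) - 1"
    by (subst Bochner_Integration.integral_diff[OF integrable measure_pmf.integrable_const]) simp
  also have "\<dots> = suminf (pc_weight m P) - 1"
    by (simp add: expectation_measure_pmf_nat[OF integrable] pc_weight_def[abs_def])
  finally show ?thesis
    using assms by (simp add: pc_def integrable_wfun_iff)
qed

lemma pM_eq_inverse_partial_sum: "pM m P M = 1 / (\<Sum>k\<le>M. pc_weight m P k)"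
proof -
  define g where "g k = (if k \<le> M then wfun m k + 1 else 0)" for k
  have integrable: "integrable (measure_pmf P) g"
    unfolding integrable_measure_pmf_nat_iff by (rule summable_finite[of "{..M}"]) (auto simp: g_def)
  have "(\<lambda>k. wfun m (trunc M k)) = (\<lambda>k. g k - 1)"
    by (simp add: fun_eq_iff g_def trunc_def wfun_def)
  then have "measure_pmf.expectation P (\<lambda>k. wfun m (trunc M k)) = measure_pmf.expectation P g - 1"
    by (simp add: Bochner_Integration.integral_diff[OF integrable measure_pmf.integrable_const])
  also have "measure_pmf.expectation P g = (\<Sum>k\<le>M. pc_weight m P k)"
    by (subst integral_measure_pmf_real[of "{..M}"]) (auto simp: g_def pc_weight_def mult.commute split: if_splits)
  finally show ?thesis
    by (simp add: pM_def)
qed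

lemma pc_weight_asymp_equiv:
  assumes "m \<ge> 2" and pmf_asymp: "(\<lambda>k. pmf P k) \<sim>[at_top] (\<lambda>k. c0 / (real m ^ k * real k powr \<alpha>))"
  shows "pc_weight m P \<sim>[at_top] (\<lambda>k. (real m - 1) * c0 * real k powr (1 - \<alpha>))"
proof -
  have "real m \<ge> 2"
    using assms(1) by simp
  then have "(\<lambda>k. wfun m k + 1) \<sim>[at_top] (\<lambda>k. (real m - 1) * real k * real m ^ k)"
    unfolding wfun_def by real_asymp
  from asymp_equiv_mult[OF pmf_asymp this]
  have "pc_weight m P \<sim>[at_top] (\<lambda>k. c0 / (real m ^ k * real k powr \<alpha>) * ((real m - 1) * real k * real m ^ k))"
    by (simp add: pc_weight_def[abs_def])
  also have "\<dots> \<sim>[at_top] (\<lambda>k. (real m - 1) * c0 * real k powr (1 - \<alpha>))"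
  proof (rule asymp_equiv_refl_ev)
    show "eventually (\<lambda>k. c0 / (real m ^ k * real k powr \<alpha>) * ((real m - 1) * real k * real m ^ k)
        = (real m - 1) * c0 * real k powr (1 - \<alpha>)) at_top"
      using eventually_gt_at_top[of 0]
      by eventually_elim (use assms(1) in \<open>simp add: powr_diff field_simps\<close>)
  qed
  finally show ?thesis .
qed

lemma pM_minus_pc_asymp_equiv_alpha_gt_2:
  assumes "m \<ge> 2" and "0 < c0" and "2 < \<alpha>"
    and pmf_asymp: "(\<lambda>k. pmf P k) \<sim>[at_top] (\<lambda>k. c0 / (real m ^ k * real k powr \<alpha>))"
  shows "(\<lambda>M. pM m P M - pc m P) \<sim>[at_top]
           (\<lambda>M. (real m - 1) * c0 * (pc m P)\<^sup>2 / (\<alpha> - 2) * (1 / real M powr (\<alpha> - 2)))"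
proof -
  let ?h = "pc_weight m P" and ?C = "(real m - 1) * c0"
  have "?C > 0"
    using assms(1,2) by simp
  have h_asymp: "?h \<sim>[at_top] (\<lambda>k. ?C * real k powr - (\<alpha> - 1))"
    using pc_weight_asymp_equiv[OF assms(1) pmf_asymp] by simp
  note tail = power_law_tail_asymp_equiv[OF h_asymp _ less_imp_le[OF \<open>?C > 0\<close>]]
  have summable: "summable ?h"
    using tail(1) \<open>2 < \<alpha>\<close> by simp
  have "eventually (\<lambda>k. ?h k > 0) at_top"
    using asymp_equiv_eventually_pos_iff[OF h_asymp] eventually_gt_at_top[of 0]
    by eventually_elim (use \<open>?C > 0\<close> in simp)
  then obtain k where "?h k > 0"
    using eventually_happens'[OF trivial_limit_sequentially] by blast
  then have "suminf ?h > 0"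
    using suminf_pos2[OF summable pc_weight_nonneg] by blast
  then have pc: "pc m P = 1 / suminf ?h" and "suminf ?h \<noteq> 0"
    using pc_eq_inverse_suminf[OF summable] by simp_all
  have "(\<lambda>M. pM m P M - pc m P) \<sim>[at_top] (\<lambda>M. (\<Sum>k. ?h (k + Suc M)) / (suminf ?h)\<^sup>2)"
    unfolding pM_eq_inverse_partial_sum pc
    by (rule inverse_partial_sums_asymp_equiv[OF summable \<open>suminf ?h \<noteq> 0\<close>])
  also have "\<dots> \<sim>[at_top] (\<lambda>M. ?C / (\<alpha> - 2) * real M powr (2 - \<alpha>) / (suminf ?h)\<^sup>2)"
    using tail(2) \<open>2 < \<alpha>\<close> by (intro asymp_equiv_intros) (simp add: algebra_simps)
  also have "\<dots> = (\<lambda>M. ?C * (pc m P)\<^sup>2 / (\<alpha> - 2) * (1 / real M powr (\<alpha> - 2)))"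
    using powr_minus_divide[of _ "\<alpha> - 2"] by (simp add: pc power_divide mult_ac)
  finally show ?thesis .
qed

lemma pM_minus_pc_asymp_equiv_alpha_eq_2:
  assumes "m \<ge> 2" and "0 < c0"
    and pmf_asymp: "(\<lambda>k. pmf P k) \<sim>[at_top] (\<lambda>k. c0 / (real m ^ k * real k powr 2))"
  shows "(\<lambda>M. pM m P M - pc m P) \<sim>[at_top] (\<lambda>M. 1 / ((real m - 1) * c0) * (1 / ln (real M)))"
proof -
  let ?h = "pc_weight m P" and ?C = "(real m - 1) * c0"
  have "?C > 0"
    using assms(1,2) by simp
  have "?h \<sim>[at_top] (\<lambda>k. ?C / real k)"
    using pc_weight_asymp_equiv[OF assms(1) pmf_asymp] by simp
  from harmonic_law_partial_sums_asymp_equiv[OF this \<open>?C > 0\<close>]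
  have partial_sums: "(\<lambda>M. \<Sum>k\<le>M. ?h k) \<sim>[at_top] (\<lambda>M. ?C * ln (real M))" .
  moreover have "filterlim (\<lambda>M. ?C * ln (real M)) at_top at_top"
    using \<open>?C > 0\<close> by real_asymp
  ultimately have "filterlim (\<lambda>M. \<Sum>k\<le>M. ?h k) at_top at_top"
    by (rule asymp_equiv_at_top_transfer[OF asymp_equiv_symI])
  then have "\<not> summable ?h"
    by (metis filterlim_at_top_imp_at_infinity not_tendsto_and_filterlim_at_infinity
        summable_LIMSEQ' trivial_limit_sequentially)
  then have "pc m P = 0"
    by (simp add: pc_def integrable_wfun_iff)
  moreover have "(\<lambda>M. 1 / (\<Sum>k\<le>M. ?h k)) \<sim>[at_top] (\<lambda>M. 1 / (?C * ln (real M)))"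
    by (rule asymp_equiv_divide[OF asymp_equiv_refl partial_sums])
  ultimately show ?thesis
    by (simp add: pM_eq_inverse_partial_sum)
qed

theorem lemma8p2:
  fixes m :: nat and P :: "nat pmf" and c0 \<alpha> :: real
  assumes "m \<ge> 2"
    and "pmf P 0 = 0"
    and "0 < c0"
    and "2 \<le> \<alpha>" and "\<alpha> \<le> 4"
    and "(\<lambda>k. pmf P k) \<sim>[at_top] (\<lambda>k. c0 / (real m ^ k * real k powr \<alpha>))"
  shows "(2 < \<alpha> \<longrightarrow>
           (\<lambda>M. pM m P M - pc m P) \<sim>[at_top]
           (\<lambda>M. (real m - 1) * c0 * (pc m P)\<^sup>2 / (\<alpha> - 2) * (1 / real M powr (\<alpha> - 2))))
       \<and> (\<alpha> = 2 \<longrightarrow>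
           (\<lambda>M. pM m P M - pc m P) \<sim>[at_top]
           (\<lambda>M. 1 / ((real m - 1) * c0) * (1 / ln (real M))))"
  using pM_minus_pc_asymp_equiv_alpha_gt_2[OF assms(1,3) _ assms(6)]
    pM_minus_pc_asymp_equiv_alpha_eq_2[OF assms(1,3)] assms(6)
  by auto

end
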